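(* Let $A$ be a finite alphabet, let $\mathbf{w}$ be an infinite LSP word over $A$ and let $f$ be a bLSP morphism on $A$. The following are equivalent: (1) $f(\mathbf{w})$ is not LSP; (2) there exist pairwise distinct letters $a,b,c$ such that $\mathbf{w}$ is $(a,b,c)$-fragile and the longest common prefix of $f(b)$ and $f(c)$ is strictly longer than the longest common prefix of $f(a)$ and $f(b)$; (3) there exist pairwise distinct letters $a,b,c$ such that $\mathbf{w}$ is $(a,b,c)$-fragile and $f$ is LSP $(a,b,c)$-breaking.
   Context: A finite word $u$ is a left special factor of a word $w$ if there are distinct letters $x\neq y$ with $xu$ and $yu$ factors of $w$. A word is LSP if every left special factor of it is a prefix of it. A bLSP morphism on $A$ is an endomorphism $f$ of $A^*$ such that there is a letter $\alpha$ with $f(\alpha)=\alpha$ and, for every letter $\beta\neq\alpha$, there is a letter $\gamma$ with $f(\beta)=f(\gamma)\beta$. For pairwise distinct letters $a,b,c$, an infinite word $\mathbf{w}$ is $(a,b,c)$-fragile if there exist a finite word $u$ and distinct letters $\beta\neq\gamma$ such that $ua$ is a prefix of $\mathbf{w}$ and $\beta ub$, $\gamma uc$ are factors of $\mathbf{w}$. A morphism $f$ is LSP $(a,b,c)$-breaking if for every $(a,b,c)$-fragile infinite LSP word $\mathbf{v}$, $f(\mathbf{v})$ is not LSP. *)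

theory Defs
  imports Main "HOL-Library.Sublist"
begin

definition factor_inf :: "'a list \<Rightarrow> (nat \<Rightarrow> 'a) \<Rightarrow> bool" where
  "factor_inf u w \<longleftrightarrow> (\<exists>i. u = map w [i..<i + length u])"

definition prefix_inf :: "'a list \<Rightarrow> (nat \<Rightarrow> 'a) \<Rightarrow> bool" where
  "prefix_inf u w \<longleftrightarrow> u = map w [0..<length u]"

definition left_special_inf :: "'a list \<Rightarrow> (nat \<Rightarrow> 'a) \<Rightarrow> bool" where
  "left_special_inf u w \<longleftrightarrow>
     (\<exists>x y. x \<noteq> y \<and> factor_inf (x # u) w \<and> factor_inf (y # u) w)"

definition LSP_inf :: "(nat \<Rightarrow> 'a) \<Rightarrow> bool" where
  "LSP_inf w \<longleftrightarrow> (\<forall>u. left_special_inf u w \<longrightarrow> prefix_inf u w)"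

definition bLSP :: "('a \<Rightarrow> 'a list) \<Rightarrow> bool" where
  "bLSP f \<longleftrightarrow> (\<exists>\<alpha>. f \<alpha> = [\<alpha>] \<and> (\<forall>\<beta>. \<beta> \<noteq> \<alpha> \<longrightarrow> (\<exists>\<gamma>. f \<beta> = f \<gamma> @ [\<beta>])))"

text \<open>Image of an infinite word under a morphism: the infinite concatenation
  f(w 0) f(w 1) ...  For non-erasing morphisms (all images nonempty, as is the case for
  bLSP morphisms) the n-th letter is already determined by the first n+1 blocks.\<close>

definition morph_inf :: "('a \<Rightarrow> 'a list) \<Rightarrow> (nat \<Rightarrow> 'a) \<Rightarrow> (nat \<Rightarrow> 'a)" where
  "morph_inf f w n = concat (map (f \<circ> w) [0..<Suc n]) ! n"

definition fragile :: "'a \<Rightarrow> 'a \<Rightarrow> 'a \<Rightarrow> (nat \<Rightarrow> 'a) \<Rightarrow> bool" where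
  "fragile a b c w \<longleftrightarrow>
     (\<exists>u \<beta> \<gamma>. \<beta> \<noteq> \<gamma> \<and> prefix_inf (u @ [a]) w
        \<and> factor_inf (\<beta> # u @ [b]) w \<and> factor_inf (\<gamma> # u @ [c]) w)"

definition LSP_breaking :: "('a \<Rightarrow> 'a list) \<Rightarrow> 'a \<Rightarrow> 'a \<Rightarrow> 'a \<Rightarrow> bool" where
  "LSP_breaking f a b c \<longleftrightarrow>
     (\<forall>v. fragile a b c v \<and> LSP_inf v \<longrightarrow> \<not> LSP_inf (morph_inf f v))"

end

theory Submission
  imports Defs
begin

text \<open>A bLSP morphism f fixes a letter \<alpha>, and every other image is an image followed by one
  letter. Hence images of letters are closed under prefixes, \<alpha> occurs in f(w) exactly at the
  starts of the blocks f(w n), and every other letter of f(w) determines its predecessor. So a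
  left special factor U of f(w) occurs at two block starts preceded by distinct letters of w.
  Occurrences of \<alpha> keep the two occurrences synchronized block by block: they are the images
  of a common factor u of w, left special and hence a prefix u a of w, followed by distinct
  letters b, c such that U ends inside f(b) and f(c). Thus |U| - |f(u)| is at most the common
  prefix of f(b) and f(c), and, as U is not a prefix of f(w), it exceeds that of f(a) and f(b).
  Conversely, for any fragile word, f(u) followed by the common prefix of f(b) and f(c) is left
  special in its image but disagrees with the prefix f(u a); this gives both the converse and
  that f is then LSP (a,b,c)-breaking.\<close>

section \<open>Longest common prefixes\<close>

lemma length_longest_common_prefix_ge:
  assumes "n \<le> length xs" "n \<le> length ys" "take n xs = take n ys"
  shows "n \<le> length (longest_common_prefix xs ys)"
proof -
  have "prefix (take n xs) (longest_common_prefix xs ys)"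
    using take_is_prefix[of n xs] take_is_prefix[of n ys] assms(3)
    by (metis longest_common_prefix_max_prefix)
  then show ?thesis
    using assms(1) prefix_length_le by fastforce
qed

lemma length_longest_common_prefix_le:
  "length (longest_common_prefix xs ys) \<le> length xs"
  "length (longest_common_prefix xs ys) \<le> length ys"
  by (simp_all add: prefix_length_le longest_common_prefix_prefix1 longest_common_prefix_prefix2)

lemma longest_common_prefix_commute:
  "longest_common_prefix xs ys = longest_common_prefix ys xs"
  by (induction xs ys rule: longest_common_prefix.induct) auto

lemma longest_common_prefix_self: "longest_common_prefix xs xs = xs"
  by (induction xs) auto

lemma nth_eq_below_longest_common_prefix:
  "t < length (longest_common_prefix xs ys) \<Longrightarrow> xs ! t = ys ! t"
  by (induction xs ys arbitrary: t rule: longest_common_prefix.induct)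
    (auto simp: nth_Cons split: if_splits nat.splits)

lemma nth_neq_at_longest_common_prefix:
  assumes "length (longest_common_prefix xs ys) < length xs"
    and "length (longest_common_prefix xs ys) < length ys"
  shows "xs ! length (longest_common_prefix xs ys) \<noteq> ys ! length (longest_common_prefix xs ys)"
  using assms by (induction xs ys rule: longest_common_prefix.induct) auto

section \<open>Factors of infinite words\<close>

lemma factor_inf_map_upt: "factor_inf (map w [i..<i + n]) w"
  unfolding factor_inf_def by (intro exI[of _ i]) simp

lemma factor_inf_Cons_iff:
  "factor_inf (x # u) w \<longleftrightarrow> (\<exists>i. x = w i \<and> u = map w [Suc i..<Suc i + length u])"
proof -
  have "[i..<i + Suc n] = i # [Suc i..<Suc i + n]" for i n :: nat
    by (simp add: upt_conv_Cons)
  then show ?thesis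
    unfolding factor_inf_def by auto
qed

lemma factor_inf_Cons_snoc_iff:
  "factor_inf (x # u @ [y]) w \<longleftrightarrow>
     (\<exists>i. x = w i \<and> u = map w [Suc i..<Suc i + length u] \<and> y = w (Suc i + length u))"
proof -
  have "map w [Suc i..<Suc i + length (u @ [y])]
      = map w [Suc i..<Suc i + length u] @ [w (Suc i + length u)]" for i
    by simp
  then show ?thesis
    unfolding factor_inf_Cons_iff by (metis append1_eq_conv)
qed

lemma factor_inf_pred_Cons:
  "0 < m \<Longrightarrow> factor_inf (w (m - 1) # map w [m..<m + k]) w"
proof -
  assume "0 < m"
  then have "w (m - 1) # map w [m..<m + k] = map w [m - 1..<(m - 1) + Suc k]"
    by (simp add: upt_conv_Cons)
  then show ?thesis
    by (metis factor_inf_map_upt)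
qed

lemma left_special_factor_is_prefix:
  assumes "LSP_inf w" "x \<noteq> y" "factor_inf (x # u) w" "factor_inf (y # u) w"
  shows "map w [0..<length u] = u"
proof -
  have "left_special_inf u w"
    using assms(2-4) unfolding left_special_inf_def by blast
  then show ?thesis
    using assms(1) unfolding LSP_inf_def prefix_inf_def by simp
qed

lemma left_special_factor_at_is_prefix:
  assumes "LSP_inf w" "0 < m" "0 < m'" "w (m - 1) \<noteq> w (m' - 1)"
    and "map w [m..<m + n] = map w [m'..<m' + n]"
  shows "map w [0..<n] = map w [m..<m + n]"
proof -
  have "factor_inf (w (m - 1) # map w [m..<m + n]) w"
    using assms(2) by (rule factor_inf_pred_Cons)
  moreover have "factor_inf (w (m' - 1) # map w [m..<m + n]) w"
    using factor_inf_pred_Cons[OF assms(3), of w n] assms(5) by simp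
  ultimately show ?thesis
    using left_special_factor_is_prefix[OF assms(1,4)] by fastforce
qed

lemma fragile_if_left_special_factor_at:
  assumes "LSP_inf w" "0 < m" "0 < m'" "w (m - 1) \<noteq> w (m' - 1)"
    and common: "map w [m..<m + k] = map w [m'..<m' + k]"
  shows "fragile (w k) (w (m + k)) (w (m' + k)) w"
  unfolding fragile_def
proof (intro exI conjI)
  show "prefix_inf (map w [m..<m + k] @ [w k]) w"
    using left_special_factor_at_is_prefix[OF assms] by (simp add: prefix_inf_def)
  show "factor_inf (w (m - 1) # map w [m..<m + k] @ [w (m + k)]) w"
    using factor_inf_pred_Cons[OF assms(2), of w "Suc k"] by simp
  show "factor_inf (w (m' - 1) # map w [m..<m + k] @ [w (m' + k)]) w"
    using factor_inf_pred_Cons[OF assms(3), of w "Suc k"] common by simp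
qed (rule assms(4))

lemma map_upt_add_eq_iff:
  "map g [i..<i + n] = map g [j..<j + n] \<longleftrightarrow> (\<forall>t<n. g (i + t) = g (j + t))"
  by (auto simp: list_eq_iff_nth_eq)

lemma ex_last_before_failure: "P 0 \<Longrightarrow> \<not> P n \<Longrightarrow> \<exists>k. P k \<and> \<not> P (Suc k)"
  by (induction n) auto

section \<open>Images of infinite words under non-erasing morphisms\<close>

locale nonerasing_morphism =
  fixes f :: "'a \<Rightarrow> 'a list"
  assumes image_nonempty: "f x \<noteq> []"
begin

definition block_start :: "(nat \<Rightarrow> 'a) \<Rightarrow> nat \<Rightarrow> nat" where
  "block_start w n = length (concat (map (f \<circ> w) [0..<n]))"

lemma block_start_0 [simp]: "block_start w 0 = 0"
  by (simp add: block_start_def)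

lemma block_start_Suc [simp]: "block_start w (Suc n) = block_start w n + length (f (w n))"
  by (simp add: block_start_def)

lemma strict_mono_block_start: "strict_mono (block_start w)"
  by (simp add: strict_mono_Suc_iff image_nonempty)

lemma block_start_add:
  "block_start w (m + k) = block_start w m + length (concat (map f (map w [m..<m + k])))"
  unfolding block_start_def using upt_add_eq_append[of 0 m k] by simp

lemma block_start_add_ge: "block_start w m + k \<le> block_start w (m + k)"
proof (induction k)
  case (Suc k)
  have "0 < length (f (w (m + k)))"
    using image_nonempty by simp
  then show ?case
    using Suc.IH by (simp del: length_greater_0_conv)
qed simp

lemma morph_inf_nth_concat:
  assumes "q < length (concat (map f (map w [0..<N])))"
  shows "morph_inf f w q = concat (map f (map w [0..<N])) ! q"
proof -
  let ?image = "\<lambda>n. concat (map f (map w [0..<n]))"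
  have prefix_of_longer: "prefix (?image n) (?image n')" if "n \<le> n'" for n n'
    using that upt_add_eq_append[of 0 n "n' - n"] by (auto simp: prefix_def)
  have nth_prefix: "xs ! i = ys ! i" if "prefix xs ys" "i < length xs" for xs ys :: "'a list" and i
    using that by (auto simp: prefix_def nth_append)
  have "Suc q \<le> block_start w (Suc q)"
    by (rule strict_mono_imp_increasing[OF strict_mono_block_start])
  then have "q < length (?image (Suc q))"
    by (simp add: block_start_def)
  then have "?image (Suc q) ! q = ?image N ! q"
    using assms prefix_of_longer[of N "Suc q"] prefix_of_longer[of "Suc q" N] nth_prefix
    by (cases "N \<le> Suc q") auto
  then show ?thesis
    by (simp add: morph_inf_def)
qed

lemma morph_inf_block_factor:
  assumes "t < length (concat (map f (map w [m..<m + k])))"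
  shows "morph_inf f w (block_start w m + t) = concat (map f (map w [m..<m + k])) ! t"
proof -
  have "concat (map f (map w [0..<m + k]))
      = concat (map f (map w [0..<m])) @ concat (map f (map w [m..<m + k]))"
    using upt_add_eq_append[of 0 m k] by simp
  then show ?thesis
    using assms morph_inf_nth_concat[of "block_start w m + t" w "m + k"]
    by (simp add: block_start_def nth_append)
qed

lemma morph_inf_block:
  "t < length (f (w n)) \<Longrightarrow> morph_inf f w (block_start w n + t) = f (w n) ! t"
  using morph_inf_block_factor[of t w n 1] by simp

lemma block_start_cover: "\<exists>n t. q = block_start w n + t \<and> t < length (f (w n))"
proof (induction q)
  case 0
  show ?case
    using image_nonempty[of "w 0"] by (intro exI[of _ 0]) auto
next
  case (Suc q)
  then obtain n t where "q = block_start w n + t" "t < length (f (w n))"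
    by blast
  then show ?case
    using image_nonempty[of "w (Suc n)"]
    by (cases "Suc t < length (f (w n))")
      (force intro: exI[of _ n] exI[of _ "Suc t"], force intro: exI[of _ "Suc n"] exI[of _ 0])
qed

lemma block_start_diff_eq:
  assumes "map w [m..<m + k] = map w [m'..<m' + k]"
  shows "block_start w (m + k) - block_start w m = block_start w (m' + k) - block_start w m'"
  using block_start_add[of w m k] block_start_add[of w m' k] assms by simp

lemma morph_inf_factors_eq:
  assumes common: "map w [m..<m + k] = map w [m'..<m' + k]"
    and "L \<le> block_start w (m + k) - block_start w m
             + length (longest_common_prefix (f (w (m + k))) (f (w (m' + k))))"
  shows "map (morph_inf f w) [block_start w m..<block_start w m + L]
       = map (morph_inf f w) [block_start w m'..<block_start w m' + L]"
  unfolding map_upt_add_eq_iff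
proof (intro allI impI)
  fix t
  assume "t < L"
  define d where "d = block_start w (m + k) - block_start w m"
  show "morph_inf f w (block_start w m + t) = morph_inf f w (block_start w m' + t)"
  proof (cases "t < d")
    case True
    then have "t < length (concat (map f (map w [m..<m + k])))"
      using block_start_add[of w m k] by (simp add: d_def)
    then show ?thesis
      using morph_inf_block_factor[of t w m k] morph_inf_block_factor[of t w m' k] common
      by simp
  next
    case False
    define s where "s = t - d"
    have ends: "block_start w (m + k) = block_start w m + d"
      "block_start w (m' + k) = block_start w m' + d"
      using block_start_diff_eq[OF common] block_start_add[of w m k] block_start_add[of w m' k]
      by (simp_all add: d_def)
    have t: "t = d + s" "s < length (longest_common_prefix (f (w (m + k))) (f (w (m' + k))))"
      using False \<open>t < L\<close> assms(2) by (simp_all add: d_def s_def)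
    then have "s < length (f (w (m + k)))" "s < length (f (w (m' + k)))"
      using length_longest_common_prefix_le order.strict_trans2 by blast+
    then have "morph_inf f w (block_start w (m + k) + s) = morph_inf f w (block_start w (m' + k) + s)"
      using t(2) by (simp add: morph_inf_block nth_eq_below_longest_common_prefix)
    then show ?thesis
      using ends t(1) by (simp add: add.assoc)
  qed
qed
end

section \<open>bLSP morphisms\<close>

locale bLSP_morphism =
  fixes f :: "'a \<Rightarrow> 'a list" and \<alpha> :: 'a
  assumes image_fixed_letter: "f \<alpha> = [\<alpha>]"
    and image_snoc: "\<beta> \<noteq> \<alpha> \<Longrightarrow> \<exists>\<gamma>. f \<beta> = f \<gamma> @ [\<beta>]"

sublocale bLSP_morphism \<subseteq> nonerasing_morphism f
proof
  show "f x \<noteq> []" for x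
    using image_fixed_letter image_snoc[of x] by (cases "x = \<alpha>") auto
qed

context bLSP_morphism
begin

lemma last_image [simp]: "last (f \<beta>) = \<beta>"
  using image_fixed_letter image_snoc[of \<beta>] by (cases "\<beta> = \<alpha>") auto

lemma inj_image: "inj f"
  by (rule inj_on_inverseI[of _ last]) simp

lemma take_image: "k < length (f \<beta>) \<Longrightarrow> take (Suc k) (f \<beta>) = f (f \<beta> ! k)"
proof (induction "length (f \<beta>)" arbitrary: \<beta> rule: less_induct)
  case less
  show ?case
  proof (cases "\<beta> = \<alpha>")
    case True
    then show ?thesis
      using less.prems image_fixed_letter by simp
  next
    case False
    then obtain \<gamma> where \<gamma>: "f \<beta> = f \<gamma> @ [\<beta>]"
      using image_snoc by blast
    show ?thesis
    proof (cases "k < length (f \<gamma>)")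
      case True
      then show ?thesis
        using less.hyps[of \<gamma>] \<gamma> by (simp add: nth_append)
    next
      case False
      then have "k = length (f \<gamma>)"
        using less.prems \<gamma> by simp
      then show ?thesis
        using \<gamma> by simp
    qed
  qed
qed

lemma length_image_nth: "k < length (f \<beta>) \<Longrightarrow> length (f (f \<beta> ! k)) = Suc k"
  by (metis take_image length_take min.absorb2 Suc_leI)

lemma length_image_eq_1_iff: "length (f x) = 1 \<longleftrightarrow> x = \<alpha>"
  using image_fixed_letter image_snoc[of x] image_nonempty by (cases "x = \<alpha>") auto

lemma image_nth_0: "f \<beta> ! 0 = \<alpha>"
  using length_image_nth[of 0 \<beta>] image_nonempty[of \<beta>] length_image_eq_1_iff by simp

lemma image_nth_neq_fixed_letter: "0 < k \<Longrightarrow> k < length (f \<beta>) \<Longrightarrow> f \<beta> ! k \<noteq> \<alpha>"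
  using length_image_nth[of k \<beta>] image_fixed_letter by auto

lemma image_nth_pred:
  assumes "0 < k" "k < length (f \<beta>)"
  shows "f (f \<beta> ! k) = f (f \<beta> ! (k - 1)) @ [f \<beta> ! k]"
proof -
  have "f (f \<beta> ! k) = take k (f \<beta>) @ [f \<beta> ! k]"
    using assms(2) by (simp add: take_image[symmetric] take_Suc_conv_app_nth)
  moreover have "take k (f \<beta>) = f (f \<beta> ! (k - 1))"
    using assms take_image[of "k - 1" \<beta>] by simp
  ultimately show ?thesis
    by simp
qed

lemma morph_inf_eq_fixed_letter_iff: "morph_inf f w q = \<alpha> \<longleftrightarrow> q \<in> range (block_start w)"
proof -
  obtain n t where q: "q = block_start w n + t" "t < length (f (w n))"
    using block_start_cover by blast
  then have "morph_inf f w q = f (w n) ! t"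
    by (simp add: morph_inf_block)
  moreover have "q \<in> range (block_start w) \<longleftrightarrow> t = 0"
  proof
    assume "q \<in> range (block_start w)"
    then obtain n' where n': "q = block_start w n'"
      by blast
    then have "block_start w n \<le> block_start w n'" "block_start w n' < block_start w (Suc n)"
      using q by simp_all
    then have "n \<le> n'" "n' < Suc n"
      using strict_mono_less_eq[OF strict_mono_block_start] strict_mono_less[OF strict_mono_block_start]
      by blast+
    then have "n' = n"
      by simp
    then show "t = 0"
      using q(1) n' by simp
  qed (use q in simp)
  ultimately show ?thesis
    using image_nth_0 image_nth_neq_fixed_letter q(2) by auto
qed

lemma morph_inf_pred:
  assumes "morph_inf f w q \<noteq> \<alpha>"
  shows "f (morph_inf f w q) = f (morph_inf f w (q - 1)) @ [morph_inf f w q]"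
proof -
  obtain n t where q: "q = block_start w n + t" "t < length (f (w n))"
    using block_start_cover by blast
  have "t \<noteq> 0"
    using assms q(1) morph_inf_eq_fixed_letter_iff by auto
  then show ?thesis
    using q image_nth_pred[of t "w n"] morph_inf_block[of t w n] morph_inf_block[of "t - 1" w n]
    by simp
qed

lemma morph_inf_before_block_start:
  assumes "0 < n"
  shows "morph_inf f w (block_start w n - 1) = w (n - 1)"
proof -
  obtain m where n: "n = Suc m"
    using assms gr0_implies_Suc by blast
  define t where "t = length (f (w m)) - 1"
  have "0 < length (f (w m))"
    using image_nonempty by simp
  then have "t < length (f (w m))" "block_start w n - 1 = block_start w m + t"
    by (simp_all add: n t_def del: length_greater_0_conv)
  then have "morph_inf f w (block_start w n - 1) = f (w m) ! t"
    by (simp add: morph_inf_block)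
  also have "\<dots> = w m"
    using last_image[of "w m"] image_nonempty[of "w m"] unfolding t_def by (metis last_conv_nth)
  finally show ?thesis
    by (simp add: n)
qed

lemma factor_inf_morph_inf_pred_Cons:
  assumes "0 < m"
  shows "factor_inf (w (m - 1) # map (morph_inf f w) [block_start w m..<block_start w m + L])
           (morph_inf f w)"
proof -
  have "0 < block_start w m"
    using assms strict_mono_block_start[of w] by (metis block_start_0 strict_mono_less)
  then show ?thesis
    using morph_inf_before_block_start[OF assms, of w]
    by (intro iffD2[OF factor_inf_Cons_iff] exI[of _ "block_start w m - 1"]) simp
qed

text \<open>Two distinct predecessors of the same letter force it to be \<alpha>, by \<open>morph_inf_pred\<close>
  and injectivity of f.\<close>

lemma left_special_factor_at_block_starts:
  assumes "x \<noteq> y" "factor_inf (x # U) (morph_inf f w)" "factor_inf (y # U) (morph_inf f w)"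
    and "U \<noteq> []"
  obtains m m' where "0 < m" "0 < m'" "x = w (m - 1)" "y = w (m' - 1)"
    "U = map (morph_inf f w) [block_start w m..<block_start w m + length U]"
    "U = map (morph_inf f w) [block_start w m'..<block_start w m' + length U]"
proof -
  let ?F = "morph_inf f w"
  obtain i j where i: "x = ?F i" "U = map ?F [Suc i..<Suc i + length U]"
    and j: "y = ?F j" "U = map ?F [Suc j..<Suc j + length U]"
    using assms(2,3) factor_inf_Cons_iff by metis
  have "U ! 0 = ?F (Suc i)" "U ! 0 = ?F (Suc j)"
    using assms(4) by (subst i(2), simp del: upt_Suc, subst j(2), simp del: upt_Suc)
  then have same_start: "?F (Suc i) = ?F (Suc j)"
    by simp
  have "?F (Suc i) = \<alpha>"
  proof (rule ccontr)
    assume "?F (Suc i) \<noteq> \<alpha>"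
    then have "f (?F i) = f (?F j)"
      using morph_inf_pred[of w "Suc i"] morph_inf_pred[of w "Suc j"] same_start by simp
    then show False
      using assms(1) i(1) j(1) inj_image by (simp add: inj_eq)
  qed
  then obtain m m' where "Suc i = block_start w m" "Suc j = block_start w m'"
    using same_start morph_inf_eq_fixed_letter_iff by (metis rangeE)
  moreover from this have "0 < m" "0 < m'"
    by (auto intro!: gr0I)
  ultimately show ?thesis
    using that i j morph_inf_before_block_start[of m w] morph_inf_before_block_start[of m' w]
    by (metis diff_Suc_1)
qed

text \<open>Block starts are exactly the occurrences of the fixed letter, so two factors of
  the image that agree and start at block starts stay synchronized block by block.\<close>

lemma next_block_length_le:
  assumes agree: "\<forall>t<L. morph_inf f w (block_start w m + t) = morph_inf f w (block_start w m' + t)"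
    and ends: "block_start w (m + k) = block_start w m + d"
      "block_start w (m' + k) = block_start w m' + d"
    and short: "d + length (f (w (m + k))) < L"
  shows "length (f (w (m' + k))) \<le> length (f (w (m + k)))"
proof -
  let ?F = "morph_inf f w" and ?e = "d + length (f (w (m + k)))"
  have "block_start w m + ?e = block_start w (Suc (m + k))"
    using ends(1) by simp
  then have "?F (block_start w m + ?e) = \<alpha>"
    unfolding morph_inf_eq_fixed_letter_iff by (metis rangeI)
  then have "?F (block_start w m' + ?e) = \<alpha>"
    using agree short by simp
  then obtain n where n: "block_start w m' + ?e = block_start w n"
    by (auto simp: morph_inf_eq_fixed_letter_iff)
  have "0 < length (f (w (m + k)))"
    using image_nonempty by simp
  then have "block_start w (m' + k) < block_start w n"
    using n ends(2) by linarith
  then have "Suc (m' + k) \<le> n"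
    using strict_mono_less[OF strict_mono_block_start] by (simp add: Suc_le_eq)
  then have "block_start w (Suc (m' + k)) \<le> block_start w n"
    using strict_mono_less_eq[OF strict_mono_block_start] by blast
  then show ?thesis
    using n ends(2) by simp
qed

lemma next_block_eq_if_agree:
  assumes agree: "\<forall>t<L. morph_inf f w (block_start w m + t) = morph_inf f w (block_start w m' + t)"
    and ends: "block_start w (m + k) = block_start w m + d"
      "block_start w (m' + k) = block_start w m' + d"
    and short: "d + length (f (w (m + k))) < L"
  shows "w (m + k) = w (m' + k)"
proof -
  have le: "length (f (w (m' + k))) \<le> length (f (w (m + k)))"
    using assms by (rule next_block_length_le)
  moreover have "length (f (w (m + k))) \<le> length (f (w (m' + k)))"
    using assms le by (intro next_block_length_le[of L w m' m k d]) auto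
  ultimately have len: "length (f (w (m + k))) = length (f (w (m' + k)))"
    by simp
  have "f (w (m + k)) = f (w (m' + k))"
  proof (rule nth_equalityI)
    fix t
    assume t: "t < length (f (w (m + k)))"
    have "f (w (m + k)) ! t = morph_inf f w (block_start w m + (d + t))"
      using morph_inf_block[of t w "m + k"] t ends(1) by (simp add: add.assoc)
    also have "\<dots> = morph_inf f w (block_start w m' + (d + t))"
      using agree t short by simp
    also have "\<dots> = f (w (m' + k)) ! t"
      using morph_inf_block[of t w "m' + k"] t len ends(2) by (simp add: add.assoc)
    finally show "f (w (m + k)) ! t = f (w (m' + k)) ! t" .
  qed (rule len)
  then show ?thesis
    using inj_image by (simp add: inj_eq)
qed

lemma common_prefix_length_ge_if_agree:
  assumes "\<forall>t<L. morph_inf f w (block_start w n + t) = morph_inf f w (block_start w n' + t)"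
    and "L \<le> length (f (w n))" "L \<le> length (f (w n'))"
  shows "L \<le> length (longest_common_prefix (f (w n)) (f (w n')))"
proof (rule length_longest_common_prefix_ge)
  show "take L (f (w n)) = take L (f (w n'))"
  proof (rule nth_equalityI)
    fix t
    assume "t < length (take L (f (w n)))"
    then show "take L (f (w n)) ! t = take L (f (w n')) ! t"
      using assms morph_inf_block[of t w n] morph_inf_block[of t w n'] by simp
  qed (use assms in simp)
qed (use assms in simp_all)

lemma maximal_common_block_factor:
  assumes agree: "\<forall>t<L. morph_inf f w (block_start w m + t) = morph_inf f w (block_start w m' + t)"
    and "0 < L"
  obtains k d where "map w [m..<m + k] = map w [m'..<m' + k]"
    "block_start w (m + k) = block_start w m + d" "block_start w (m' + k) = block_start w m' + d"
    "d < L" "L \<le> d + length (f (w (m + k)))" "L \<le> d + length (f (w (m' + k)))"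
proof -
  define P where "P k \<longleftrightarrow> map w [m..<m + k] = map w [m'..<m' + k]
    \<and> block_start w (m + k) - block_start w m < L" for k
  have "P 0"
    using assms(2) by (simp add: P_def)
  moreover have "\<not> P L"
  proof -
    have "\<not> block_start w (m + L) - block_start w m < L"
      using block_start_add_ge[of w m L] by linarith
    then show ?thesis
      by (simp add: P_def)
  qed
  ultimately obtain k where "P k" "\<not> P (Suc k)"
    using ex_last_before_failure by blast
  define d where "d = block_start w (m + k) - block_start w m"
  have common: "map w [m..<m + k] = map w [m'..<m' + k]" and "d < L"
    using \<open>P k\<close> by (simp_all add: P_def d_def)
  have ends: "block_start w (m + k) = block_start w m + d"
    "block_start w (m' + k) = block_start w m' + d"
    using block_start_add_ge[of w m k] block_start_add_ge[of w m' k] block_start_diff_eq[OF common]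
    by (simp_all add: d_def)
  have fits: "L \<le> d + length (f (w (m + k)))"
  proof (rule ccontr)
    assume "\<not> ?thesis"
    then have short: "d + length (f (w (m + k))) < L"
      by simp
    have "w (m + k) = w (m' + k)"
      using agree ends short by (rule next_block_eq_if_agree)
    then have "P (Suc k)"
      using common short ends by (simp add: P_def)
    then show False
      using \<open>\<not> P (Suc k)\<close> by simp
  qed
  have "L \<le> d + length (f (w (m' + k)))"
  proof (rule ccontr)
    assume short: "\<not> L \<le> d + length (f (w (m' + k)))"
    then have "w (m' + k) = w (m + k)"
      using agree ends by (intro next_block_eq_if_agree[of L w m' m k d]) auto
    then show False
      using fits short by simp
  qed
  then show ?thesis
    using that common ends \<open>d < L\<close> fits by blast
qed

lemma morph_inf_at_common_prefix_neq:
  assumes "length (longest_common_prefix (f (w n)) (f b)) < length (f b)"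
  shows "morph_inf f w (block_start w n + length (longest_common_prefix (f (w n)) (f b)))
           \<noteq> f b ! length (longest_common_prefix (f (w n)) (f b))"
proof (cases "length (longest_common_prefix (f (w n)) (f b)) < length (f (w n))")
  case True
  then show ?thesis
    using assms morph_inf_block nth_neq_at_longest_common_prefix by simp
next
  case False
  then have q: "length (longest_common_prefix (f (w n)) (f b)) = length (f (w n))"
    using length_longest_common_prefix_le(1) le_antisym not_less by blast
  then have "block_start w n + length (longest_common_prefix (f (w n)) (f b))
      = block_start w (Suc n)"
    by simp
  then have "morph_inf f w (block_start w n + length (longest_common_prefix (f (w n)) (f b))) = \<alpha>"
    unfolding morph_inf_eq_fixed_letter_iff by (metis rangeI)
  moreover have "0 < length (f (w n))"
    using image_nonempty by simp
  ultimately show ?thesis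
    using assms q image_nth_neq_fixed_letter by metis
qed

lemma not_LSP_image_if_fragile:
  assumes "fragile a b c v"
    and lcp_less: "length (longest_common_prefix (f a) (f b)) < length (longest_common_prefix (f b) (f c))"
  shows "\<not> LSP_inf (morph_inf f v)"
proof
  assume LSP: "LSP_inf (morph_inf f v)"
  let ?F = "morph_inf f v"
  obtain u \<beta> \<gamma> where "\<beta> \<noteq> \<gamma>" and a: "prefix_inf (u @ [a]) v"
    and "factor_inf (\<beta> # u @ [b]) v" "factor_inf (\<gamma> # u @ [c]) v"
    using assms(1) unfolding fragile_def by blast
  define n where "n = length u"
  obtain i where i: "\<beta> = v i" "u = map v [Suc i..<Suc i + n]" "b = v (Suc i + n)"
    using \<open>factor_inf (\<beta> # u @ [b]) v\<close> unfolding factor_inf_Cons_snoc_iff n_def by blast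
  obtain j where j: "\<gamma> = v j" "u = map v [Suc j..<Suc j + n]" "c = v (Suc j + n)"
    using \<open>factor_inf (\<gamma> # u @ [c]) v\<close> unfolding factor_inf_Cons_snoc_iff n_def by blast
  have u: "u = map v [0..<n]" "a = v n"
    using a by (simp_all add: prefix_inf_def n_def)
  define m m' where "m = Suc i" and "m' = Suc j"
  have common: "map v [m..<m + n] = map v [m'..<m' + n]" "map v [m..<m + n] = map v [0..<0 + n]"
    using i j u by (simp_all add: m_def m'_def)
  define d where "d = block_start v (m + n) - block_start v m"
  define ll where "ll = length (longest_common_prefix (f b) (f c))"
  define q where "q = length (longest_common_prefix (f a) (f b))"
  define U where "U = map ?F [block_start v m..<block_start v m + (d + ll)]"
  have "map ?F [block_start v m'..<block_start v m' + (d + ll)] = U"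
    using morph_inf_factors_eq[OF common(1), of "d + ll"] i(3) j(3)
    by (simp add: U_def d_def ll_def m_def m'_def)
  then have "factor_inf (\<gamma> # U) ?F"
    using factor_inf_morph_inf_pred_Cons[of m' v "d + ll"] j(1) by (simp add: m'_def)
  moreover have "factor_inf (\<beta> # U) ?F"
    using factor_inf_morph_inf_pred_Cons[of m v "d + ll"] i(1) by (simp add: U_def m_def)
  ultimately have "map ?F [0..<length U] = U"
    using left_special_factor_is_prefix[OF LSP \<open>\<beta> \<noteq> \<gamma>\<close>] by blast
  then have "map ?F [0..<d + ll] = U"
    by (simp add: U_def)
  then have prefix: "?F (block_start v m + (d + q)) = ?F (d + q)"
    using lcp_less map_upt_add_eq_iff[of ?F "block_start v m" "d + ll" 0]
    by (simp add: U_def q_def ll_def)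
  have "q < length (f b)"
    using lcp_less length_longest_common_prefix_le(1)[of "f b" "f c"] by (simp add: q_def)
  then have "f b ! q = ?F (block_start v (m + n) + q)"
    using morph_inf_block[of q v "m + n"] i(3) by (simp add: m_def)
  also have "\<dots> = ?F (block_start v m + (d + q))"
    using block_start_add_ge[of v m n] by (simp add: d_def)
  also have "\<dots> = ?F (block_start v n + q)"
    using prefix block_start_diff_eq[OF common(2)] by (simp add: d_def)
  finally show False
    using morph_inf_at_common_prefix_neq[of v n b] \<open>q < length (f b)\<close> u(2) by (simp add: q_def)
qed

lemma fragile_if_not_LSP_image:
  assumes LSP: "LSP_inf w" and "\<not> LSP_inf (morph_inf f w)"
  shows "\<exists>a b c. a \<noteq> b \<and> a \<noteq> c \<and> b \<noteq> c \<and> fragile a b c w \<and>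
           length (longest_common_prefix (f b) (f c)) > length (longest_common_prefix (f a) (f b))"
proof -
  let ?F = "morph_inf f w"
  obtain U x y where xy: "x \<noteq> y" "factor_inf (x # U) ?F" "factor_inf (y # U) ?F"
    and not_prefix: "\<not> prefix_inf U ?F"
    using assms(2) unfolding LSP_inf_def left_special_inf_def by blast
  then have "U \<noteq> []"
    by (auto simp: prefix_inf_def)
  with xy obtain m m' where "0 < m" "0 < m'" "x = w (m - 1)" "y = w (m' - 1)"
    and U: "U = map ?F [block_start w m..<block_start w m + length U]"
      "U = map ?F [block_start w m'..<block_start w m' + length U]"
    by (rule left_special_factor_at_block_starts)
  define L where "L = length U"
  have agree: "\<forall>t<L. ?F (block_start w m + t) = ?F (block_start w m' + t)"
    using U map_upt_add_eq_iff by (metis L_def)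
  obtain k d where common: "map w [m..<m + k] = map w [m'..<m' + k]"
    and ends: "block_start w (m + k) = block_start w m + d"
      "block_start w (m' + k) = block_start w m' + d"
    and "d < L" and fits: "L \<le> d + length (f (w (m + k)))" "L \<le> d + length (f (w (m' + k)))"
    using maximal_common_block_factor[OF agree] \<open>U \<noteq> []\<close> by (auto simp: L_def)
  define a b c where "a = w k" and "b = w (m + k)" and "c = w (m' + k)"
  have distinct: "w (m - 1) \<noteq> w (m' - 1)"
    using \<open>x \<noteq> y\<close> \<open>x = w (m - 1)\<close> \<open>y = w (m' - 1)\<close> by simp
  note left_special = left_special_factor_at_is_prefix[OF LSP \<open>0 < m\<close> \<open>0 < m'\<close> distinct]
  have "L - d \<le> length (longest_common_prefix (f b) (f c))"
    using common_prefix_length_ge_if_agree[of "L - d" w "m + k" "m' + k"] agree ends fits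
    by (simp add: b_def c_def add.assoc)
  moreover have lcp_ab: "length (longest_common_prefix (f a) (f b)) < L - d"
  proof (rule ccontr)
    assume "\<not> ?thesis"
    then have "map ?F [block_start w m..<block_start w m + L] = map ?F [0..<L]"
      using morph_inf_factors_eq[of w m k 0 L] left_special[OF common] ends \<open>d < L\<close>
      by (simp add: a_def b_def longest_common_prefix_commute)
    then have "prefix_inf U ?F"
      using U(1) by (simp add: prefix_inf_def L_def)
    then show False
      using not_prefix by simp
  qed
  moreover have "b \<noteq> c"
  proof
    assume "b = c"
    then have "a = b"
      using left_special[of "Suc k"] common by (simp add: a_def b_def c_def)
    then show False
      using lcp_ab fits(1) by (simp add: b_def longest_common_prefix_self)
  qed
  moreover have "fragile a b c w"
    unfolding a_def b_def c_def
    using fragile_if_left_special_factor_at[OF LSP \<open>0 < m\<close> \<open>0 < m'\<close> distinct common] .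
  ultimately show ?thesis
    using length_longest_common_prefix_le(1)[of "f b" "f c"]
    by (metis less_le_trans longest_common_prefix_commute longest_common_prefix_self not_less)
qed
end

theorem lemma3:
  fixes w :: "nat \<Rightarrow> 'a::finite" and f :: "'a \<Rightarrow> 'a list"
  assumes "LSP_inf w" and "bLSP f"
  shows "(\<not> LSP_inf (morph_inf f w) \<longleftrightarrow>
            (\<exists>a b c. a \<noteq> b \<and> a \<noteq> c \<and> b \<noteq> c \<and> fragile a b c w \<and>
               length (longest_common_prefix (f b) (f c)) > length (longest_common_prefix (f a) (f b))))
       \<and> ((\<exists>a b c. a \<noteq> b \<and> a \<noteq> c \<and> b \<noteq> c \<and> fragile a b c w \<and>
               length (longest_common_prefix (f b) (f c)) > length (longest_common_prefix (f a) (f b)))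
          \<longleftrightarrow> (\<exists>a b c. a \<noteq> b \<and> a \<noteq> c \<and> b \<noteq> c \<and> fragile a b c w \<and> LSP_breaking f a b c))"
proof -
  obtain \<alpha> where "bLSP_morphism f \<alpha>"
    using assms(2) unfolding bLSP_def bLSP_morphism_def by blast
  then interpret bLSP_morphism f \<alpha> .
  have breaking: "LSP_breaking f a b c"
    if "length (longest_common_prefix (f a) (f b)) < length (longest_common_prefix (f b) (f c))"
    for a b c
    using that not_LSP_image_if_fragile unfolding LSP_breaking_def by blast
  have breaking_imp_not_LSP: "\<not> LSP_inf (morph_inf f w)" if "LSP_breaking f a b c" "fragile a b c w"
    for a b c
    using that assms(1) unfolding LSP_breaking_def by blast
  show ?thesis (is "(\<not> ?LSP \<longleftrightarrow> ?lcp) \<and> (?lcp \<longleftrightarrow> ?breaking)")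
  proof (intro conjI iffI)
    assume "\<not> ?LSP"
    then show ?lcp
      by (rule fragile_if_not_LSP_image[OF assms(1)])
  next
    assume ?lcp
    then show "\<not> ?LSP"
      using not_LSP_image_if_fragile by blast
  next
    assume ?lcp
    then show ?breaking
      using breaking by blast
  next
    assume ?breaking
    then have "\<not> ?LSP"
      using breaking_imp_not_LSP by blast
    then show ?lcp
      by (rule fragile_if_not_LSP_image[OF assms(1)])
  qed
qed

end
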